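(* Let $q\ge 2$ be even, let $m\ge 2$ and $n$ be integers, and let $\boldsymbol{x}\in\Sigma_q^n$ be an $m$-RCD root. If $\boldsymbol{y}=RC_{k,i}(\boldsymbol{x})$ for some integer $k\ge 3m-3$ and some position $i\in[1,n-k+1]$, then $\boldsymbol{y}_{[i+k,i+2k-1]}=\boldsymbol{y}_{[i,i+k-1]}^{RC}$, and $\boldsymbol{y}_{[j+k,j+2k-1]}\neq \boldsymbol{y}_{[j,j+k-1]}^{RC}$ for every integer $j$ with $1\le j<i$.
   Context: $\Sigma_q=\{0,1,\dots,q-1\}$, and $[a,b]=\{a,a+1,\dots,b\}$ (empty if $a>b$). For $\boldsymbol{x}=x_1\cdots x_n$, $\boldsymbol{x}_{[a,b]}=x_a\cdots x_b$. A complement operation is a fixed bijection $a\mapsto\overline{a}$ on $\Sigma_q$ with $\overline{a}\ne a$ and $\overline{\overline{a}}=a$ for all $a$ (so $q$ is even). For $\boldsymbol{x}=x_1\cdots x_n$, its reverse-complement is $\boldsymbol{x}^{RC}=\overline{x_n}\,\overline{x_{n-1}}\cdots\overline{x_1}$. For $\boldsymbol{x}=\boldsymbol{u}\boldsymbol{v}\boldsymbol{w}$ with $|\boldsymbol{u}|=i-1$, $|\boldsymbol{v}|=k$, the $k$-reverse-complement duplication at position $i$ gives $RC_{k,i}(\boldsymbol{x})=\boldsymbol{u}\boldsymbol{v}\boldsymbol{v}^{RC}\boldsymbol{w}$. A string $\boldsymbol{x}\in\Sigma_q^n$ is an $m$-RCD root if $\boldsymbol{x}_{[i+m,i+2m-1]}\ne\boldsymbol{x}_{[i,i+m-1]}^{RC}$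 for every $i\in[1,n-2m+1]$. *)

theory Defs
  imports Main
begin

text \<open>Strings over \<Sigma>_q are lists of naturals with all entries < q.
  Positions are 1-indexed as in the paper.\<close>

definition is_complement :: "nat \<Rightarrow> (nat \<Rightarrow> nat) \<Rightarrow> bool" where
  "is_complement q c \<longleftrightarrow> (\<forall>a<q. c a < q \<and> c a \<noteq> a \<and> c (c a) = a)"

text \<open>x_[a,b] = x_a ... x_b (empty if a > b), for a \<ge> 1.\<close>
definition substr :: "'a list \<Rightarrow> nat \<Rightarrow> nat \<Rightarrow> 'a list" where
  "substr x a b = take (Suc b - a) (drop (a - 1) x)"

definition revcomp :: "(nat \<Rightarrow> nat) \<Rightarrow> nat list \<Rightarrow> nat list" where
  "revcomp c x = map c (rev x)"

text \<open>RC_{k,i}(x) = u v v^RC w with |u| = i-1, |v| = k.\<close>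
definition RCdup :: "(nat \<Rightarrow> nat) \<Rightarrow> nat \<Rightarrow> nat \<Rightarrow> nat list \<Rightarrow> nat list" where
  "RCdup c k i x = take (i - 1) x @ substr x i (i + k - 1)
                   @ revcomp c (substr x i (i + k - 1)) @ drop (i + k - 1) x"

definition RCD_root :: "(nat \<Rightarrow> nat) \<Rightarrow> nat \<Rightarrow> nat list \<Rightarrow> bool" where
  "RCD_root c m x \<longleftrightarrow> (\<forall>i. 1 \<le> i \<and> i + 2*m - 1 \<le> length x \<longrightarrow>
      substr x (i + m) (i + 2*m - 1) \<noteq> revcomp c (substr x i (i + m - 1)))"

end

theory Submission
  imports Defs
begin

(* The duplicated factor v v^RC is a reverse-complement palindrome hinged at the cut after
   position i - 1 + k.  A second such palindrome of arm k hinged d > 0 positions earlier makes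
   y 2d-periodic on their overlap, because two reflections compose to a shift by 2d.  A
   reflection composed with a shift by 2T is again a reflection; taking for T the largest
   multiple of d below m yields a reverse-complement palindrome of arm m lying entirely in
   the prefix of y copied from x, which an m-RCD root cannot contain. *)

(* 0-based: the factor of length 2L around the cut before index h has the form w w^RC. *)
definition rc_mirror :: "(nat \<Rightarrow> nat) \<Rightarrow> nat list \<Rightarrow> nat \<Rightarrow> nat \<Rightarrow> bool" where
  "rc_mirror c z h L \<longleftrightarrow> L \<le> h \<and> h + L \<le> length z \<and> (\<forall>s<L. z ! (h + s) = c (z ! (h - 1 - s)))"

lemma substr_eq_take_drop:
  assumes "1 \<le> a"
  shows "substr z a (a + L - 1) = take L (drop (a - 1) z)"
  unfolding substr_def using assms by (cases L) auto

lemma substr_rc_square_iff_rc_mirror: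
  assumes "1 \<le> a" "a + 2*L - 1 \<le> length z"
  shows "substr z (a + L) (a + 2*L - 1) = revcomp c (substr z a (a + L - 1))
         \<longleftrightarrow> rc_mirror c z (a - 1 + L) L"
proof -
  have "substr z (a + L) (a + 2*L - 1) = take L (drop (a - 1 + L) z)"
    using substr_eq_take_drop[of "a + L" z L] assms(1) by (simp add: mult_2 add.assoc)
  moreover have "substr z a (a + L - 1) = take L (drop (a - 1) z)"
    using substr_eq_take_drop assms(1) .
  ultimately show ?thesis
    using assms by (auto simp: rc_mirror_def revcomp_def list_eq_iff_nth_eq rev_nth algebra_simps)
qed

lemma RCD_root_no_rc_mirror:
  assumes "RCD_root c m x"
  shows "\<not> rc_mirror c x h m"
proof
  assume mirror: "rc_mirror c x h m"
  then have "1 \<le> h + 1 - m" "h + 1 - m + 2*m - 1 \<le> length x" "h + 1 - m - 1 + m = h"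
    by (auto simp: rc_mirror_def)
  with mirror assms show False
    unfolding RCD_root_def by (metis substr_rc_square_iff_rc_mirror)
qed

lemma rc_mirror_append_iff:
  assumes "h + L \<le> length u"
  shows "rc_mirror c (u @ w) h L \<longleftrightarrow> rc_mirror c u h L"
  using assms by (auto simp: rc_mirror_def nth_append)

lemma rc_mirror_reflect:
  assumes mirror: "rc_mirror c z h L" and inv: "\<forall>a\<in>set z. c (c a) = a"
    and "h - L \<le> a" "h - L \<le> b" "a + b + 1 = 2*h"
  shows "z ! b = c (z ! a)"
proof (cases "h \<le> b")
  case True
  then have "b - h < L" "h + (b - h) = b" "h - 1 - (b - h) = a"
    using assms(3-5) mirror by (auto simp: rc_mirror_def)
  then show ?thesis using mirror unfolding rc_mirror_def by metis
next
  case False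
  then have "a - h < L" "h + (a - h) = a" "h - 1 - (a - h) = b"
    using assms(3-5) mirror by (auto simp: rc_mirror_def)
  then have "z ! a = c (z ! b)" using mirror unfolding rc_mirror_def by metis
  moreover have "z ! b \<in> set z" using False mirror by (simp add: rc_mirror_def)
  ultimately show ?thesis using inv by simp
qed

lemma rc_mirrors_periodic:
  assumes inv: "\<forall>a\<in>set z. c (c a) = a"
    and mirror1: "rc_mirror c z h L" and mirror2: "rc_mirror c z (h + d) L"
    and "h - L \<le> p" "p + d < h + L"
  shows "z ! (p + 2*d) = z ! p"
proof -
  define b where "b = 2*h - 1 - p"
  have "z ! b = c (z ! p)"
    using rc_mirror_reflect[OF mirror1 inv, of p b] assms(4,5) mirror1
    by (simp add: b_def rc_mirror_def)
  moreover have "z ! (p + 2*d) = c (z ! b)"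
    using rc_mirror_reflect[OF mirror2 inv, of b "p + 2*d"] assms(4,5) mirror1
    by (simp add: b_def rc_mirror_def)
  moreover have "z ! p \<in> set z" using assms(4,5) mirror1 by (simp add: rc_mirror_def)
  ultimately show ?thesis using inv by simp
qed

lemma rc_mirrors_periodic_iter:
  assumes inv: "\<forall>a\<in>set z. c (c a) = a"
    and mirror1: "rc_mirror c z h L" and mirror2: "rc_mirror c z (h + d) L"
    and "h - L \<le> p" "p + 2*d*t < h + L + d"
  shows "z ! (p + 2*d*t) = z ! p"
  using assms(5)
proof (induction t)
  case (Suc t)
  have "z ! (p + 2*d*Suc t) = z ! ((p + 2*d*t) + 2*d)" by (simp add: algebra_simps)
  also have "\<dots> = z ! (p + 2*d*t)"
    using rc_mirrors_periodic[OF inv mirror1 mirror2] assms(4) Suc.prems by simp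
  also have "\<dots> = z ! p" using Suc by simp
  finally show ?case .
qed simp

lemma rc_mirrors_shifted_mirror:
  assumes inv: "\<forall>a\<in>set z. c (c a) = a"
    and mirror1: "rc_mirror c z h L" and mirror2: "rc_mirror c z (h + d) L"
    and "d * t < m" "2*m \<le> L + 1"
  shows "rc_mirror c z (h - d*t) m"
  unfolding rc_mirror_def
proof (intro conjI allI impI)
  show "m \<le> h - d*t" "h - d*t + m \<le> length z"
    using assms(4,5) mirror1 by (auto simp: rc_mirror_def)
  fix s assume "s < m"
  define p where "p = h - d*t - 1 - s"
  have p_range: "h - L \<le> p" "p + 2*d*t < h + L + d" "p + 2*d*t + (h - d*t + s) + 1 = 2*h"
    using \<open>s < m\<close> assms(4,5) mirror1 by (auto simp: p_def rc_mirror_def)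
  have "z ! (h - d*t + s) = c (z ! (p + 2*d*t))"
    using rc_mirror_reflect[OF mirror1 inv] p_range by simp
  also have "z ! (p + 2*d*t) = z ! p"
    using rc_mirrors_periodic_iter[OF inv mirror1 mirror2] p_range by simp
  finally show "z ! (h - d*t + s) = c (z ! (h - d*t - 1 - s))"
    by (simp add: p_def)
qed

lemma rc_mirrors_short_mirror_before:
  assumes inv: "\<forall>a\<in>set z. c (c a) = a"
    and mirror1: "rc_mirror c z h L" and mirror2: "rc_mirror c z (h + d) L"
    and "0 < d" "0 < m" "2*m \<le> L + 1"
  shows "\<exists>e. e + m \<le> h + d \<and> rc_mirror c z e m"
proof -
  define t where "t = (m - 1) div d"
  have "d * t \<le> m - 1" unfolding t_def by (metis div_times_less_eq_dividend mult.commute)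
  moreover have "m - 1 < d * t + d"
    using mult_div_mod_eq[of d "m - 1"] mod_less_divisor[OF \<open>0 < d\<close>, of "m - 1"]
    unfolding t_def by linarith
  ultimately have "h - d*t + m \<le> h + d" "rc_mirror c z (h - d*t) m"
    using rc_mirrors_shifted_mirror[OF inv mirror1 mirror2, of t m] assms(5,6) mirror1
    by (auto simp: rc_mirror_def)
  then show ?thesis by blast
qed

lemma RCdup_eq:
  assumes "1 \<le> i"
  shows "RCdup c k i x = take (i - 1 + k) x @ revcomp c (take k (drop (i - 1) x)) @ drop (i - 1 + k) x"
proof -
  have "i + k - 1 = (i - 1) + k" using assms by simp
  then show ?thesis unfolding RCdup_def substr_eq_take_drop[OF assms] take_add by simp
qed

lemma rc_mirror_RCdup:
  assumes "1 \<le> i" "i + k - 1 \<le> length x"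
  shows "rc_mirror c (RCdup c k i x) (i - 1 + k) k"
  using assms unfolding RCdup_eq[OF assms(1)]
  by (auto simp: rc_mirror_def revcomp_def nth_append rev_nth min_def)

lemma RCdup_involution:
  assumes "\<forall>a\<in>set x. c (c a) = a"
  shows "\<forall>a\<in>set (RCdup c k i x). c (c a) = a"
  using assms unfolding RCdup_def substr_def revcomp_def
  by (auto dest!: in_set_takeD in_set_dropD)

lemma rc_mirror_RCdup_prefix:
  assumes "1 \<le> i" "i + k - 1 \<le> length x"
    and "rc_mirror c (RCdup c k i x) e m" "e + m \<le> i - 1 + k"
  shows "rc_mirror c x e m"
proof -
  define N where "N = i - 1 + k"
  have len: "length (take N x) = N" using assms(1,2) by (simp add: N_def)
  have "RCdup c k i x = take N x @ revcomp c (take k (drop (i - 1) x)) @ drop N x"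
    using RCdup_eq[OF assms(1)] by (simp add: N_def)
  then have "rc_mirror c (take N x) e m"
    using assms(3,4) len rc_mirror_append_iff by (metis N_def)
  then show ?thesis
    using assms(4) len rc_mirror_append_iff[of e m "take N x" c "drop N x"] by (simp add: N_def)
qed

lemma RCdup_no_earlier_rc_mirror:
  assumes inv: "\<forall>a\<in>set x. c (c a) = a" and root: "RCD_root c m x"
    and "0 < m" "2*m \<le> k + 1" "1 \<le> i" "i + k - 1 \<le> length x" "h < i - 1 + k"
  shows "\<not> rc_mirror c (RCdup c k i x) h k"
proof
  assume mirror_h: "rc_mirror c (RCdup c k i x) h k"
  have shift: "h + (i - 1 + k - h) = i - 1 + k" using assms(7) by simp
  have mirror_i: "rc_mirror c (RCdup c k i x) (h + (i - 1 + k - h)) k"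
    unfolding shift using rc_mirror_RCdup assms(5,6) .
  obtain e where "e + m \<le> i - 1 + k" "rc_mirror c (RCdup c k i x) e m"
    using rc_mirrors_short_mirror_before[OF RCdup_involution[OF inv] mirror_h mirror_i, of m]
      assms(3,4,7) unfolding shift by auto
  then have "rc_mirror c x e m" using rc_mirror_RCdup_prefix assms(5,6) by blast
  then show False using RCD_root_no_rc_mirror root by blast
qed

theorem lemma1:
  fixes q m n k i :: nat and c :: "nat \<Rightarrow> nat" and x y :: "nat list"
  assumes "q \<ge> 2" and "even q" and "is_complement q c"
    and "m \<ge> 2"
    and "length x = n" and "set x \<subseteq> {0..<q}"
    and "RCD_root c m x"
    and "k \<ge> 3*m - 3"
    and "1 \<le> i" and "i + k - 1 \<le> n"
    and "y = RCdup c k i x"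
  shows "substr y (i + k) (i + 2*k - 1) = revcomp c (substr y i (i + k - 1))
         \<and> (\<forall>j. 1 \<le> j \<and> j < i \<longrightarrow>
              substr y (j + k) (j + 2*k - 1) \<noteq> revcomp c (substr y j (j + k - 1)))"
proof -
  have len_y: "length y = n + k"
    using assms(5,9-11) by (simp add: RCdup_eq revcomp_def)
  have inv: "\<forall>a\<in>set x. c (c a) = a"
    using assms(3,6) by (auto simp: is_complement_def)
  \<comment> \<open>The hypothesis k \<ge> 3m - 3 enters only through 2m \<le> k + 1.\<close>
  have m: "0 < m" "2*m \<le> k + 1" using assms(4,8) by linarith+
  show ?thesis
  proof (intro conjI allI impI)
    show "substr y (i + k) (i + 2*k - 1) = revcomp c (substr y i (i + k - 1))"
      using substr_rc_square_iff_rc_mirror[of i k y c] rc_mirror_RCdup assms(5,9-11) len_y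
      by simp
  next
    fix j assume j: "1 \<le> j \<and> j < i"
    then have "j + 2*k - 1 \<le> length y" "j - 1 + k < i - 1 + k"
      using assms(10) len_y by linarith+
    then show "substr y (j + k) (j + 2*k - 1) \<noteq> revcomp c (substr y j (j + k - 1))"
      using substr_rc_square_iff_rc_mirror[of j k y c]
        RCdup_no_earlier_rc_mirror[OF inv assms(7) m, of i "j - 1 + k"] j assms(5,9-11)
      by simp
  qed
qed

end
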